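(* Let $X$ be a Tychonoff space. The following are equivalent: (1) $X$ is finite; (2) $T''(X)$ is Noetherian; (3) $T''(X)$ is Artinian.
   Context: $C(X)$ is the ring of real-valued continuous functions on $X$; a cozero set is a set $\{x: h(x)\neq 0\}$ with $h\in C(X)$. $T''(X)$ is the ring (under pointwise operations) of all functions $f\colon X\to\mathbb{R}$ for which there is a dense cozero set $U$ of $X$ with $f|_U$ continuous. *)

theory Defs
  imports "HOL-Analysis.Analysis" "HOL-Algebra.Ring_Divisibility"
begin

definition tychonoff_space :: "'a topology \<Rightarrow> bool" where
  "tychonoff_space X \<longleftrightarrow> completely_regular_space X \<and> t1_space X"

definition cozero_set :: "'a topology \<Rightarrow> ('a \<Rightarrow> real) \<Rightarrow> 'a set" where
  "cozero_set X h = {x \<in> topspace X. h x \<noteq> 0}"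

definition is_cozero :: "'a topology \<Rightarrow> 'a set \<Rightarrow> bool" where
  "is_cozero X U \<longleftrightarrow> (\<exists>h. continuous_map X euclideanreal h \<and> U = cozero_set X h)"

text \<open>Functions X -> R are represented as extensional functions on topspace X.\<close>
definition Tpp_carrier :: "'a topology \<Rightarrow> ('a \<Rightarrow> real) set" where
  "Tpp_carrier X = {f. f \<in> extensional (topspace X) \<and>
     (\<exists>U. is_cozero X U \<and> X closure_of U = topspace X \<and>
          continuous_map (subtopology X U) euclideanreal f)}"

definition Tpp :: "'a topology \<Rightarrow> ('a \<Rightarrow> real) ring" where
  "Tpp X = \<lparr> carrier = Tpp_carrier X,
             mult = (\<lambda>f g. \<lambda>x\<in>topspace X. f x * g x),
             one = (\<lambda>x\<in>topspace X. 1),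
             zero = (\<lambda>x\<in>topspace X. 0),
             add = (\<lambda>f g. \<lambda>x\<in>topspace X. f x + g x) \<rparr>"

definition artinian_ring :: "('b, 'c) ring_scheme \<Rightarrow> bool" where
  "artinian_ring R \<longleftrightarrow> ring R \<and>
     (\<forall>I :: nat \<Rightarrow> 'b set. (\<forall>n. ideal (I n) R) \<and> (\<forall>n. I (Suc n) \<subseteq> I n)
        \<longrightarrow> (\<exists>m. \<forall>n\<ge>m. I n = I m))"

end

theory Submission
  imports Defs
begin

text \<open>
  If \<open>X\<close> is finite it is discrete, so \<open>T''(X)\<close> is the ring of all functions on \<open>X\<close>;
  every ideal consists of the functions vanishing on its common zero set, hence there are
  only finitely many ideals.

  If \<open>X\<close> is infinite, complete regularity separates points from closed sets by continuous
  functions, and these belong to \<open>T''(X)\<close>. For distinct points \<open>y\<^sub>0, y\<^sub>1, \<dots>\<close> the ideals of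
  functions vanishing at \<open>y\<^sub>0, \<dots>, y\<^bsub>n-1\<^esub>\<close> descend strictly. Choosing the \<open>y\<^sub>n\<close> so that each
  \<open>y\<^sub>n\<close> has a neighbourhood missing all later points (possible in every infinite Hausdorff
  space), the ideals of functions vanishing at \<open>y\<^sub>n, y\<^bsub>n+1\<^esub>, \<dots>\<close> ascend strictly.
\<close>

lemma (in noetherian_ring) ascending_ideal_sequence_stabilizes:
  fixes I :: "nat \<Rightarrow> 'a set"
  assumes "\<And>n. ideal (I n) R" and "\<And>n. I n \<subseteq> I (Suc n)"
  shows "\<exists>m. \<forall>n\<ge>m. I n = I m"
proof -
  have mono: "I m \<subseteq> I n" if "m \<le> n" for m n
    using lift_Suc_mono_le[of I, OF assms(2) that] .
  have "I a \<subseteq> I b \<or> I b \<subseteq> I a" for a b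
    using mono[of a b] mono[of b a] by linarith
  then have "subset.chain {I. ideal I R} (range I)"
    unfolding pred_on.chain_def using assms(1) by blast
  then obtain m where m: "\<Union>(range I) = I m"
    using ideal_chain_is_trivial[of "range I"] by auto
  have "I n = I m" if "n \<ge> m" for n
    using mono[OF that] m by blast
  then show ?thesis by blast
qed

lemma (in ring) finite_ideals_imp_noetherian:
  assumes "finite {I. ideal I R}"
  shows "noetherian_ring R"
proof (rule trivial_ideal_chain_imp_noetherian)
  fix C assume "C \<noteq> {}" and chain: "subset.chain {I. ideal I R} C"
  then have "finite C"
    using assms pred_on.chain_def finite_subset by metis
  then show "\<Union>C \<in> C"
    using Union_in_chain \<open>C \<noteq> {}\<close> chain by blast
qed

lemma finite_ideals_imp_artinian:
  assumes "ring R" and "finite {I. ideal I R}"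
  shows "artinian_ring R"
  unfolding artinian_ring_def
proof (intro conjI allI impI)
  fix I :: "nat \<Rightarrow> _"
  assume "(\<forall>n. ideal (I n) R) \<and> (\<forall>n. I (Suc n) \<subseteq> I n)"
  then have ideals: "range I \<subseteq> {I. ideal I R}" and antimono: "I n \<subseteq> I m" if "m \<le> n" for m n
    using lift_Suc_antimono_le[of I, OF _ that] by auto
  have "I a \<subseteq> I b \<or> I b \<subseteq> I a" for a b
    using antimono[of a b] antimono[of b a] by linarith
  then have "subset.chain {I. ideal I R} (range I)"
    unfolding pred_on.chain_def using ideals by blast
  moreover have "finite (range I)"
    using assms(2) ideals finite_subset by blast
  ultimately obtain m where m: "\<Inter>(range I) = I m"
    using Inter_in_chain[of "range I"] by auto
  have "I n = I m" if "n \<ge> m" for n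
    using antimono[OF that] m by blast
  then show "\<exists>m. \<forall>n\<ge>m. I n = I m" by blast
qed (fact assms(1))

lemma (in ring) idealI_add_mult_closed:
  assumes "I \<subseteq> carrier R" and "\<zero> \<in> I" and "\<And>a b. a \<in> I \<Longrightarrow> b \<in> I \<Longrightarrow> a \<oplus> b \<in> I"
    and l_closed: "\<And>a x. a \<in> I \<Longrightarrow> x \<in> carrier R \<Longrightarrow> x \<otimes> a \<in> I"
    and r_closed: "\<And>a x. a \<in> I \<Longrightarrow> x \<in> carrier R \<Longrightarrow> a \<otimes> x \<in> I"
  shows "ideal I R"
proof (rule idealI[OF ring_axioms])
  have "\<ominus> a \<in> I" if "a \<in> I" for a
    using l_closed[OF that, of "\<ominus> \<one>"] that assms(1) l_minus[of \<one> a] by auto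
  then show "subgroup I (add_monoid R)"
    using assms(1-3) by (auto intro!: subgroup.intro simp: a_inv_def)
qed (fact l_closed r_closed)+

section \<open>Separated sequences in Hausdorff spaces\<close>

lemma Hausdorff_space_split_infinite:
  assumes "Hausdorff_space X" and "infinite S" and "S \<subseteq> topspace X"
  shows "\<exists>y V. y \<in> S \<and> openin X V \<and> y \<in> V \<and> infinite (S - V)"
proof -
  obtain a b where ab: "a \<in> S" "b \<in> S" "a \<noteq> b"
    using assms(2) by (metis finite.simps finite_subset insertI1 subsetI)
  then obtain A B where AB: "openin X A" "openin X B" "a \<in> A" "b \<in> B" "disjnt A B"
    using assms(1,3) unfolding Hausdorff_space_def by (meson subsetD)
  show ?thesis
  proof (cases "finite (S - A)")
    case True
    then have "infinite (S \<inter> A)"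
      using assms(2) by (metis Int_Diff_Un finite_UnI)
    moreover have "S \<inter> A \<subseteq> S - B"
      using AB(5) by (auto simp: disjnt_def)
    ultimately show ?thesis
      using ab AB finite_subset by blast
  qed (use ab AB in blast)
qed

lemma infinite_Hausdorff_space_separated_sequence:
  assumes "Hausdorff_space X" and "infinite (topspace X)"
  obtains y :: "nat \<Rightarrow> 'a" and V :: "nat \<Rightarrow> 'a set"
  where "\<And>n. y n \<in> topspace X" "\<And>n. openin X (V n)" "\<And>n. y n \<in> V n"
    and "\<And>n k. n < k \<Longrightarrow> y k \<notin> V n"
proof -
  define P where "P = (\<lambda>(_::nat) S. infinite S \<and> S \<subseteq> topspace X)"
  define Q where "Q = (\<lambda>(_::nat) S S'. \<exists>y V. y \<in> S \<and> openin X V \<and> y \<in> V \<and> S' = S - V)"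
  have "\<exists>S'. P (Suc n) S' \<and> Q n S S'" if PS: "P n S" for n S
  proof -
    obtain y V where "y \<in> S" "openin X V" "y \<in> V" "infinite (S - V)"
      using Hausdorff_space_split_infinite[OF assms(1)] PS unfolding P_def by blast
    then show ?thesis
      using PS unfolding P_def Q_def by (intro exI[of _ "S - V"]) blast
  qed
  moreover have "P 0 (topspace X)"
    using assms(2) unfolding P_def by simp
  ultimately obtain S where S: "\<And>n. P n (S n)" and "\<And>n. Q n (S n) (S (Suc n))"
    using dependent_nat_choice[of P Q] by blast
  then have "\<forall>n. \<exists>y V. y \<in> S n \<and> openin X V \<and> y \<in> V \<and> S (Suc n) = S n - V"
    unfolding Q_def by blast
  then obtain y V
    where yV: "\<And>n. y n \<in> S n \<and> openin X (V n) \<and> y n \<in> V n \<and> S (Suc n) = S n - V n"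
    by metis
  have "S k \<subseteq> S n" if "n \<le> k" for n k
    using lift_Suc_antimono_le[of S, OF _ that] yV by blast
  then have "y k \<notin> V n" if "n < k" for n k
    using yV[of k] yV[of n] that by (metis Diff_iff Suc_leI subsetD)
  moreover have "y n \<in> topspace X" for n
    using yV S unfolding P_def by blast
  ultimately show thesis
    using that yV by blast
qed

section \<open>Vanishing ideals of \<open>T''(X)\<close>\<close>

lemma Tpp_simps:
  "carrier (Tpp X) = Tpp_carrier X"
  "mult (Tpp X) = (\<lambda>f g. \<lambda>x\<in>topspace X. f x * g x)"
  "one (Tpp X) = (\<lambda>x\<in>topspace X. 1)"
  "zero (Tpp X) = (\<lambda>x\<in>topspace X. 0)"
  "add (Tpp X) = (\<lambda>f g. \<lambda>x\<in>topspace X. f x + g x)"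
  by (simp_all add: Tpp_def)

lemma is_cozero_topspace: "is_cozero X (topspace X)"
  unfolding is_cozero_def cozero_set_def
  by (rule exI[of _ "\<lambda>_. 1"]) auto

lemma restrict_continuous_in_Tpp:
  assumes "continuous_map X euclideanreal h"
  shows "restrict h (topspace X) \<in> carrier (Tpp X)"
  using assms is_cozero_topspace[of X]
  by (auto simp: Tpp_simps Tpp_carrier_def continuous_map_eq intro!: exI[of _ "topspace X"])

definition vanishing_ideal :: "'a topology \<Rightarrow> 'a set \<Rightarrow> ('a \<Rightarrow> real) set" where
  "vanishing_ideal X S = {f \<in> carrier (Tpp X). \<forall>x\<in>S. f x = 0}"

lemma ideal_vanishing_ideal:
  assumes "ring (Tpp X)" and "S \<subseteq> topspace X"
  shows "ideal (vanishing_ideal X S) (Tpp X)"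
proof -
  interpret ring "Tpp X" by fact
  show ?thesis
    unfolding vanishing_ideal_def using assms(2)
    by (intro idealI_add_mult_closed)
      (use zero_closed a_closed m_closed in \<open>auto simp: Tpp_simps(2,4,5) subset_iff\<close>)
qed

lemma vanishing_ideal_insert_psubset:
  assumes "completely_regular_space X" and "closedin X C" and "S \<subseteq> C"
    and "x \<in> topspace X" and "x \<notin> C"
  shows "vanishing_ideal X (insert x S) \<subset> vanishing_ideal X S"
proof -
  obtain f :: "'a \<Rightarrow> real"
    where f: "continuous_map X (top_of_set {0..1}) f" "f x = 0" "f ` C \<subseteq> {1}"
    using assms(1,2,4,5) unfolding completely_regular_space_def by blast
  then have "continuous_map X euclideanreal (\<lambda>z. 1 - f z)"
    by (simp add: continuous_map_in_subtopology continuous_map_diff)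
  then have "restrict (\<lambda>z. 1 - f z) (topspace X)
      \<in> vanishing_ideal X S - vanishing_ideal X (insert x S)"
    using restrict_continuous_in_Tpp f(2,3) assms(3,4) closedin_subset[OF assms(2)]
    by (auto simp: vanishing_ideal_def image_subset_iff subset_iff)
  then show ?thesis
    unfolding vanishing_ideal_def by blast
qed

lemma infinite_imp_not_noetherian_Tpp:
  assumes "tychonoff_space X" and "infinite (topspace X)"
  shows "\<not> noetherian_ring (Tpp X)"
proof
  assume "noetherian_ring (Tpp X)"
  then interpret noetherian_ring "Tpp X" .
  have "Hausdorff_space X"
    using assms(1) completely_regular_imp_regular_space regular_t1_imp_Hausdorff_space
    unfolding tychonoff_space_def by blast
  then obtain y :: "nat \<Rightarrow> 'a" and V
    where y: "\<And>n. y n \<in> topspace X" and V: "\<And>n. openin X (V n)" "\<And>n. y n \<in> V n"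
      and separated: "\<And>n k. n < k \<Longrightarrow> y k \<notin> V n"
    using infinite_Hausdorff_space_separated_sequence assms(2) by blast
  define A where "A n = vanishing_ideal X (y ` {n..})" for n
  have psubset: "A n \<subset> A (Suc n)" for n
  proof -
    have "{n..} = insert n {Suc n..}"
      by auto
    then have insert: "y ` {n..} = insert (y n) (y ` {Suc n..})"
      by simp
    have "y ` {Suc n..} \<subseteq> topspace X - V n"
      using y separated by auto
    moreover have "closedin X (topspace X - V n)"
      using V(1) by (simp add: closedin_diff)
    ultimately show ?thesis
      unfolding A_def insert using assms(1) y V(2)
      by (intro vanishing_ideal_insert_psubset) (auto simp: tychonoff_space_def)
  qed
  have "ideal (A n) (Tpp X)" for n
    unfolding A_def using ring_axioms y by (auto intro: ideal_vanishing_ideal)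
  then obtain m where "\<forall>n\<ge>m. A n = A m"
    using ascending_ideal_sequence_stabilizes[of A] psubset by blast
  then have "A (Suc m) = A m"
    using le_SucI[OF order.refl] by blast
  with psubset[of m] show False
    by simp
qed

lemma infinite_imp_not_artinian_Tpp:
  assumes "tychonoff_space X" and "infinite (topspace X)"
  shows "\<not> artinian_ring (Tpp X)"
proof
  assume "artinian_ring (Tpp X)"
  then have ring: "ring (Tpp X)"
    and descending: "\<And>I. (\<forall>n. ideal (I n) (Tpp X)) \<and> (\<forall>n. I (Suc n) \<subseteq> I n)
                       \<Longrightarrow> \<exists>m. \<forall>n\<ge>m. I n = I m"
    unfolding artinian_ring_def by blast+
  obtain y :: "nat \<Rightarrow> 'a" where "inj y" and y: "range y \<subseteq> topspace X"
    using infinite_countable_subset assms(2) by blast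
  define B where "B n = vanishing_ideal X (y ` {..<n})" for n
  have psubset: "B (Suc n) \<subset> B n" for n
  proof -
    have "t1_space X"
      using assms(1) by (simp add: tychonoff_space_def)
    then have "closedin X (y ` {..<n})"
      using y by (simp add: t1_space_closedin_finite image_subset_iff)
    moreover have "y n \<notin> y ` {..<n}"
      using \<open>inj y\<close> by (auto dest: injD)
    ultimately show ?thesis
      unfolding B_def lessThan_Suc image_insert using assms(1) y
      by (intro vanishing_ideal_insert_psubset) (auto simp: tychonoff_space_def)
  qed
  have "ideal (B n) (Tpp X)" for n
    unfolding B_def using ring y by (auto intro: ideal_vanishing_ideal)
  then obtain m where "\<forall>n\<ge>m. B n = B m"
    using descending[of B] psubset_imp_subset[OF psubset] by blast
  then have "B (Suc m) = B m"
    using le_SucI[OF order.refl] by blast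
  with psubset[of m] show False
    by simp
qed

lemma Tpp_carrier_finite:
  assumes "finite (topspace X)" and "t1_space X"
  shows "carrier (Tpp X) = extensional (topspace X)"
proof
  show "carrier (Tpp X) \<subseteq> extensional (topspace X)"
    by (auto simp: Tpp_simps Tpp_carrier_def)
  have discrete: "X = discrete_topology (topspace X)"
    using finite_t1_space_imp_discrete_topology[OF refl assms] .
  have "continuous_map X euclideanreal f" for f :: "'a \<Rightarrow> real"
    by (subst discrete) simp
  then show "extensional (topspace X) \<subseteq> carrier (Tpp X)"
    using is_cozero_topspace[of X] by (auto simp: Tpp_simps Tpp_carrier_def)
qed

lemma ring_Tpp_finite:
  assumes "finite (topspace X)" and "t1_space X"
  shows "ring (Tpp X)"
proof -
  note carrier = Tpp_carrier_finite[OF assms]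
  show ?thesis
  proof (rule ringI)
    show "abelian_group (Tpp X)"
    proof (rule abelian_groupI)
      show "\<exists>y\<in>carrier (Tpp X). y \<oplus>\<^bsub>Tpp X\<^esub> x = \<zero>\<^bsub>Tpp X\<^esub>" if "x \<in> carrier (Tpp X)" for x
        by (rule bexI[of _ "\<lambda>z\<in>topspace X. - x z"]) (auto simp: carrier Tpp_simps(2-5) fun_eq_iff)
    qed (auto simp: carrier Tpp_simps(2-5) fun_eq_iff extensional_def)
    show "monoid (Tpp X)"
      by (rule monoidI) (auto simp: carrier Tpp_simps(2-5) fun_eq_iff extensional_def)
  qed (auto simp: carrier Tpp_simps(2-5) fun_eq_iff extensional_def algebra_simps)
qed

lemma Tpp_ideal_eq_vanishing_ideal_of_zeros:
  assumes "finite (topspace X)" and "t1_space X" and "ideal I (Tpp X)"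
  shows "I = vanishing_ideal X {x \<in> topspace X. \<forall>g\<in>I. g x = 0}"
    (is "I = vanishing_ideal X ?Z")
proof
  interpret ideal I "Tpp X" by fact
  note carrier = Tpp_carrier_finite[OF assms(1,2)]
  show "I \<subseteq> vanishing_ideal X ?Z"
    using a_subset by (auto simp: vanishing_ideal_def)
  show "vanishing_ideal X ?Z \<subseteq> I"
  proof
    fix f assume f: "f \<in> vanishing_ideal X ?Z"
    let ?f_on = "\<lambda>A. \<lambda>y\<in>topspace X. if y \<in> A then f y else 0"
    have f_on_in_I: "?f_on A \<in> I" if "finite A" and "A \<subseteq> topspace X - ?Z" for A
      using that
    proof (induction A rule: finite_induct)
      case empty
      then show ?case
        using additive_subgroup.zero_closed[OF additive_subgroup_axioms]
        by (simp add: Tpp_simps restrict_def)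
    next
      case (insert a A)
      then obtain g where g: "g \<in> I" "g a \<noteq> 0"
        by blast
      \<comment> \<open>\<open>e \<otimes> g\<close> agrees with \<open>f\<close> at \<open>a\<close> and vanishes elsewhere\<close>
      define e where "e = (\<lambda>y\<in>topspace X. if y = a then f a / g a else 0)"
      have "e \<in> carrier (Tpp X)"
        unfolding carrier e_def by simp
      then have "?f_on A \<oplus>\<^bsub>Tpp X\<^esub> (e \<otimes>\<^bsub>Tpp X\<^esub> g) \<in> I"
        using insert g(1) additive_subgroup.a_closed[OF additive_subgroup_axioms] I_l_closed
        by blast
      moreover have "?f_on A \<oplus>\<^bsub>Tpp X\<^esub> (e \<otimes>\<^bsub>Tpp X\<^esub> g) = ?f_on (insert a A)"
        using insert.hyps(2) g(2) by (auto simp: Tpp_simps e_def fun_eq_iff)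
      ultimately show ?case
        by (simp only:)
    qed
    have "?f_on (topspace X - ?Z) \<in> I"
      using assms(1) by (intro f_on_in_I) auto
    moreover have "?f_on (topspace X - ?Z) = f"
      using f carrier by (auto simp: vanishing_ideal_def fun_eq_iff extensional_def)
    ultimately show "f \<in> I"
      by simp
  qed
qed

lemma finite_ideals_Tpp:
  assumes "finite (topspace X)" and "t1_space X"
  shows "finite {I. ideal I (Tpp X)}"
proof (rule finite_subset)
  show "{I. ideal I (Tpp X)} \<subseteq> vanishing_ideal X ` Pow (topspace X)"
    using Tpp_ideal_eq_vanishing_ideal_of_zeros[OF assms] by blast
qed (use assms(1) in simp)

theorem theorem5p1:
  fixes X :: "'a topology"
  assumes "tychonoff_space X"
  shows "(finite (topspace X) \<longleftrightarrow> noetherian_ring (Tpp X))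
       \<and> (finite (topspace X) \<longleftrightarrow> artinian_ring (Tpp X))"
proof -
  have "t1_space X"
    using assms by (simp add: tychonoff_space_def)
  then have "noetherian_ring (Tpp X) \<and> artinian_ring (Tpp X)" if "finite (topspace X)"
    using ring.finite_ideals_imp_noetherian finite_ideals_imp_artinian
      ring_Tpp_finite[OF that] finite_ideals_Tpp[OF that] by blast
  then show ?thesis
    using infinite_imp_not_noetherian_Tpp[OF assms] infinite_imp_not_artinian_Tpp[OF assms]
    by blast
qed

end
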